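(* Let $\mathcal{B}=\{B_j:j\in\mathbb{N}_0\}$ be a correlation basis, let $X,Y$ be continuous random variables and, for $N\in\mathbb{N}$, let $P_N^B=(\rho^B_{jk}(X,Y))_{j,k\in\{1,\dots,N\}}$. Then for every $N\in\mathbb{N}$ the matrices $I_N\pm(P_N^B+(P_N^B)^\top)/2$ are symmetric and positive semi-definite, where $I_N$ is the $N\times N$ identity. If moreover $(U,V)=(F_X(X),F_Y(Y))$ is exchangeable, i.e. $(U,V)\stackrel{d}{=}(V,U)$, then the matrices $I_N\pm P_N^B$ are positive semi-definite.
   Context: A correlation basis is a complete orthonormal system $\{B_j:j\in\mathbb{N}_0\}$ of $\mathcal{L}^2([0,1])$ (with respect to Lebesgue measure) with $B_0\equiv1$. For continuous $X,Y$ with distribution functions $F_X,F_Y$, the basis correlation of order $(j,k)$, $j,k\in\mathbb{N}$, is $\rho^B_{jk}(X,Y)=\rho(B_j(F_X(X)),B_k(F_Y(Y)))$, with $\rho$ Pearson correlation. *)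

theory Defs
  imports "HOL-Probability.Probability"
begin

definition correlation_basis :: "(nat \<Rightarrow> real \<Rightarrow> real) \<Rightarrow> bool" where
  "correlation_basis B \<longleftrightarrow>
     (\<forall>j. B j \<in> borel_measurable lborel \<and> set_integrable lborel {0..1} (\<lambda>x. (B j x)\<^sup>2)) \<and>
     (\<forall>j k. (LBINT x:{0..1}. B j x * B k x) = (if j = k then 1 else 0)) \<and>
     (\<forall>f. f \<in> borel_measurable lborel \<longrightarrow> set_integrable lborel {0..1} (\<lambda>x. (f x)\<^sup>2) \<longrightarrow>
          (\<forall>j. (LBINT x:{0..1}. f x * B j x) = 0) \<longrightarrow>
          (AE x in lborel. x \<in> {0..1} \<longrightarrow> f x = 0)) \<and>
     (\<forall>x. B 0 x = 1)"

definition pearson_corr :: "'a measure \<Rightarrow> ('a \<Rightarrow> real) \<Rightarrow> ('a \<Rightarrow> real) \<Rightarrow> real" where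
  "pearson_corr M A C =
     (integral\<^sup>L M (\<lambda>w. (A w - integral\<^sup>L M A) * (C w - integral\<^sup>L M C))) /
     sqrt ((integral\<^sup>L M (\<lambda>w. (A w - integral\<^sup>L M A)\<^sup>2)) * (integral\<^sup>L M (\<lambda>w. (C w - integral\<^sup>L M C)\<^sup>2)))"

definition distr_fun :: "'a measure \<Rightarrow> ('a \<Rightarrow> real) \<Rightarrow> real \<Rightarrow> real" where
  "distr_fun M X = cdf (distr M borel X)"

definition basis_corr :: "(nat \<Rightarrow> real \<Rightarrow> real) \<Rightarrow> 'a measure \<Rightarrow> ('a \<Rightarrow> real) \<Rightarrow> ('a \<Rightarrow> real) \<Rightarrow> nat \<Rightarrow> nat \<Rightarrow> real" where
  "basis_corr B M X Y j k =
     pearson_corr M (\<lambda>w. B j (distr_fun M X (X w))) (\<lambda>w. B k (distr_fun M Y (Y w)))"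

text \<open>N x N real matrices represented as nat \<Rightarrow> nat \<Rightarrow> real, indices in {1..N}.\<close>
definition mat_symmetric :: "nat \<Rightarrow> (nat \<Rightarrow> nat \<Rightarrow> real) \<Rightarrow> bool" where
  "mat_symmetric N A \<longleftrightarrow> (\<forall>j\<in>{1..N}. \<forall>k\<in>{1..N}. A j k = A k j)"

definition mat_psd :: "nat \<Rightarrow> (nat \<Rightarrow> nat \<Rightarrow> real) \<Rightarrow> bool" where
  "mat_psd N A \<longleftrightarrow> mat_symmetric N A \<and>
     (\<forall>v :: nat \<Rightarrow> real. (\<Sum>j\<in>{1..N}. \<Sum>k\<in>{1..N}. v j * A j k * v k) \<ge> 0)"

definition id_mat :: "nat \<Rightarrow> nat \<Rightarrow> real" where
  "id_mat j k = (if j = k then 1 else 0)"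

end

theory Submission
  imports Defs
begin

text \<open>
  Since F_X is continuous, U = F_X(X) is uniform on [0,1] (probability integral transform), so the
  variables A_j = B_j(U) are orthonormal in L^2 and, as B_0 = 1, centred for j \<ge> 1; the same holds
  for C_k = B_k(V) with V = F_Y(Y). Hence the basis correlation is the cross moment E[A_j C_k].
  For s = 1 or s = -1 the Gram matrix of the variables A_j + s C_j (1 \<le> j \<le> N) is
  2 (I_N + s (P + P^T) / 2), which is therefore positive semi-definite. If (U, V) is exchangeable,
  every moment entering the Pearson correlation is unchanged by swapping U and V, so P is symmetric.
\<close>

lemma continuous_mono_sublevel_eq_atMost:
  fixes F :: "real \<Rightarrow> real"
  assumes cont: "continuous_on UNIV F" and "mono F"
    and lim: "(F \<longlongrightarrow> l) at_top" and "a < l" and nonempty: "\<exists>x. F x \<le> a"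
  shows "\<exists>c. {x. F x \<le> a} = {..c} \<and> F c = a"
proof -
  define S where "S = {x. F x \<le> a}"
  obtain x0 where x0: "\<And>x. x \<ge> x0 \<Longrightarrow> a < F x"
    using order_tendstoD(1)[OF lim \<open>a < l\<close>] by (auto simp: eventually_at_top_linorder)
  have "S \<subseteq> {..x0}"
  proof
    show "x \<in> {..x0}" if "x \<in> S" for x
      using that x0[of x] by (cases "x0 \<le> x") (auto simp: S_def)
  qed
  then have bdd: "bdd_above S" by (meson bdd_above_Iic bdd_above_mono)
  have "closed S"
    unfolding S_def using cont by (intro closed_Collect_le) (auto intro: continuous_intros)
  define c where "c = Sup S"
  have "c \<in> S"
  proof -
    have "S \<noteq> {}" using nonempty by (auto simp: S_def)
    then show ?thesis unfolding c_def using bdd \<open>closed S\<close> by (rule closed_contains_Sup)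
  qed
  have S_eq: "S = {..c}"
  proof (intro set_eqI iffI)
    show "x \<in> {..c}" if "x \<in> S" for x using that bdd unfolding c_def by (simp add: cSup_upper)
    show "x \<in> S" if "x \<in> {..c}" for x
      using that \<open>c \<in> S\<close> monoD[OF \<open>mono F\<close>, of x c] unfolding S_def by simp
  qed
  have "c \<le> x0" using \<open>c \<in> S\<close> \<open>S \<subseteq> {..x0}\<close> by auto
  moreover have "F c \<le> a" "a \<le> F x0" using \<open>c \<in> S\<close> x0[of x0] by (auto simp: S_def)
  ultimately obtain y where "c \<le> y" "F y = a"
    using IVT'[of F c a x0] continuous_on_subset[OF cont subset_UNIV] by auto
  then have "y \<in> S" "c \<le> y" by (simp_all add: S_def)
  with S_eq \<open>F y = a\<close> have "F c = a" by auto
  with S_eq show ?thesis unfolding S_def by blast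
qed

lemma (in real_distribution) measure_cdf_le:
  assumes "continuous_on UNIV (cdf M)"
  shows "measure M {x. cdf M x \<le> a} = measure lborel ({0..1} \<inter> {..a})"
proof -
  consider "a < 0" | "1 \<le> a" | "0 \<le> a" "a < 1" by linarith
  then show ?thesis
  proof cases
    case 1
    then have "{x. cdf M x \<le> a} = {}" "{0..1} \<inter> {..a} = {}"
      using cdf_nonneg by (auto simp: not_le intro: less_le_trans)
    then show ?thesis by simp
  next
    case 2
    then have "{x. cdf M x \<le> a} = space M" "{0..1} \<inter> {..a} = {0..1}"
      using cdf_bounded_prob by (auto intro: order_trans)
    then show ?thesis using prob_space by simp
  next
    case 3
    show ?thesis
    proof (cases "\<exists>x. cdf M x \<le> a")
      case True
      have "mono (cdf M)" by (simp add: mono_def cdf_nondecreasing)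
      then obtain c where "{x. cdf M x \<le> a} = {..c}" "cdf M c = a"
        using continuous_mono_sublevel_eq_atMost[OF assms _ cdf_lim_at_top_prob _ True] 3 by blast
      with 3 show ?thesis by (simp add: cdf_def)
    next
      case False
      have "a = 0"
      proof (rule ccontr)
        assume "a \<noteq> 0"
        with 3 have "eventually (\<lambda>x. cdf M x < a) at_bot"
          by (intro order_tendstoD(2)[OF cdf_lim_at_bot]) simp
        then obtain x where "cdf M x < a" by (auto simp: eventually_at_bot_linorder)
        with False show False by (meson less_imp_le)
      qed
      with False show ?thesis by simp
    qed
  qed
qed

lemma borel_measurable_distr_fun:
  assumes "prob_space M" and "X \<in> borel_measurable M"
  shows "distr_fun M X \<in> borel_measurable borel"
proof -
  interpret real_distribution "distr M borel X"
    using assms by (simp add: prob_space.real_distribution_distr)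
  show ?thesis
    unfolding distr_fun_def by (rule borel_measurable_mono) (simp add: mono_def cdf_nondecreasing)
qed

lemma prob_integral_transform:
  fixes X :: "'a \<Rightarrow> real"
  assumes "prob_space M" and [measurable]: "X \<in> borel_measurable M"
    and cont: "\<forall>x. isCont (distr_fun M X) x"
  shows "distributed M lborel (\<lambda>w. distr_fun M X (X w)) (\<lambda>x. ennreal (indicator {0..1} x))"
proof -
  interpret prob_space M by fact
  interpret \<mu>: real_distribution "distr M borel X" by simp
  have F: "distr_fun M X = cdf (distr M borel X)" by (simp add: distr_fun_def)
  have "continuous_on UNIV (distr_fun M X)"
    using cont by (simp add: continuous_at_imp_continuous_on)
  have [measurable]: "distr_fun M X \<in> borel_measurable borel"
    using \<open>prob_space M\<close> by (rule borel_measurable_distr_fun) simp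
  have "emeasure M {w \<in> space M. distr_fun M X (X w) \<le> a} = emeasure lborel ({0..1} \<inter> {..a}) / 1"
    for a
  proof -
    have "emeasure M {w \<in> space M. distr_fun M X (X w) \<le> a}
        = emeasure (distr M borel X) {x. distr_fun M X x \<le> a}"
      by (subst emeasure_distr) (auto intro!: arg_cong[where f="emeasure M"])
    also have "\<dots> = measure lborel ({0..1} \<inter> {..a})"
      using \<mu>.measure_cdf_le \<open>continuous_on UNIV (distr_fun M X)\<close>
      by (simp add: F \<mu>.emeasure_eq_measure)
    also have "\<dots> = emeasure lborel ({0..1} \<inter> {..a})"
      by (rule emeasure_eq_ennreal_measure[symmetric]) (simp add: emeasure_lborel_Icc_eq)
    finally show ?thesis by (simp add: divide_ennreal_def)
  qed
  then show ?thesis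
    using uniform_distrI_borel[of "\<lambda>w. distr_fun M X (X w)" M "{0..1}" 1] by simp
qed

lemma
  fixes X :: "'a \<Rightarrow> real" and g :: "real \<Rightarrow> real"
  assumes "prob_space M" and "X \<in> borel_measurable M"
    and "\<forall>x. isCont (distr_fun M X) x" and "g \<in> borel_measurable borel"
  shows integrable_prob_integral_transform_iff:
      "integrable M (\<lambda>w. g (distr_fun M X (X w))) \<longleftrightarrow> set_integrable lborel {0..1} g"
    and integral_prob_integral_transform:
      "(\<integral>w. g (distr_fun M X (X w)) \<partial>M) = (LBINT x:{0..1}. g x)"
proof -
  note U = prob_integral_transform[OF assms(1-3)]
  have g: "g \<in> borel_measurable lborel" using assms(4) by simp
  have ind: "(\<lambda>x. indicator {0..1} x * g x) = (\<lambda>x. indicator {0..1::real} x *\<^sub>R g x)" by simp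
  show "integrable M (\<lambda>w. g (distr_fun M X (X w))) \<longleftrightarrow> set_integrable lborel {0..1} g"
    using distributed_integrable[OF U g] unfolding set_integrable_def ind by simp
  show "(\<integral>w. g (distr_fun M X (X w)) \<partial>M) = (LBINT x:{0..1}. g x)"
    using distributed_integral[OF U g] unfolding set_lebesgue_integral_def ind by simp
qed

lemma integrable_mult_of_square_integrable:
  fixes f g :: "'a \<Rightarrow> real"
  assumes [measurable]: "f \<in> borel_measurable M" "g \<in> borel_measurable M"
    and "integrable M (\<lambda>x. (f x)\<^sup>2)" "integrable M (\<lambda>x. (g x)\<^sup>2)"
  shows "integrable M (\<lambda>x. f x * g x)"
proof (rule Bochner_Integration.integrable_bound)
  show "integrable M (\<lambda>x. (f x)\<^sup>2 + (g x)\<^sup>2)" using assms by simp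
  show "AE x in M. norm (f x * g x) \<le> norm ((f x)\<^sup>2 + (g x)\<^sup>2)"
  proof (intro AE_I2)
    fix x
    have "2 * \<bar>f x\<bar> * \<bar>g x\<bar> \<le> \<bar>f x\<bar>\<^sup>2 + \<bar>g x\<bar>\<^sup>2" by (rule sum_squares_bound)
    moreover have "0 \<le> \<bar>f x\<bar> * \<bar>g x\<bar>" by simp
    ultimately have "\<bar>f x\<bar> * \<bar>g x\<bar> \<le> (f x)\<^sup>2 + (g x)\<^sup>2" by (simp only: power2_abs mult.assoc)
    then show "norm (f x * g x) \<le> norm ((f x)\<^sup>2 + (g x)\<^sup>2)" by (simp add: abs_mult)
  qed
qed simp

definition orthonormal_family :: "'a measure \<Rightarrow> (nat \<Rightarrow> 'a \<Rightarrow> real) \<Rightarrow> bool" where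
  "orthonormal_family M A \<longleftrightarrow>
     (\<forall>j. A j \<in> borel_measurable M \<and> integrable M (\<lambda>w. (A j w)\<^sup>2)) \<and>
     (\<forall>j k. (\<integral>w. A j w * A k w \<partial>M) = id_mat j k)"

lemma orthonormal_family_correlation_basis_comp:
  fixes X :: "'a \<Rightarrow> real"
  assumes "prob_space M" and "correlation_basis B" and "X \<in> borel_measurable M"
    and "\<forall>x. isCont (distr_fun M X) x"
  shows "orthonormal_family M (\<lambda>j w. B j (distr_fun M X (X w)))"
proof -
  have [measurable]: "B i \<in> borel_measurable borel" for i
    using \<open>correlation_basis B\<close> by (simp add: correlation_basis_def)
  have [measurable]: "distr_fun M X \<in> borel_measurable borel" "X \<in> borel_measurable M"
    using assms(1,3) by (simp_all add: borel_measurable_distr_fun)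
  have "integrable M (\<lambda>w. (B j (distr_fun M X (X w)))\<^sup>2)" for j
    using \<open>correlation_basis B\<close>
    by (subst integrable_prob_integral_transform_iff[OF assms(1,3,4), where g="\<lambda>x. (B j x)\<^sup>2"])
      (simp_all add: correlation_basis_def)
  moreover have "(\<integral>w. B j (distr_fun M X (X w)) * B k (distr_fun M X (X w)) \<partial>M) = id_mat j k" for j k
    using \<open>correlation_basis B\<close>
    by (subst integral_prob_integral_transform[OF assms(1,3,4), where g="\<lambda>x. B j x * B k x"])
      (simp_all add: correlation_basis_def id_mat_def)
  ultimately show ?thesis unfolding orthonormal_family_def by simp
qed

lemma pearson_corr_standardized:
  assumes "integral\<^sup>L M A = 0" and "integral\<^sup>L M C = 0"
    and "(\<integral>w. (A w)\<^sup>2 \<partial>M) = 1" and "(\<integral>w. (C w)\<^sup>2 \<partial>M) = 1"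
  shows "pearson_corr M A C = (\<integral>w. A w * C w \<partial>M)"
  using assms by (simp add: pearson_corr_def)

lemma basis_corr_eq_cross_moment:
  fixes X Y :: "'a \<Rightarrow> real"
  assumes "prob_space M" and "correlation_basis B"
    and "X \<in> borel_measurable M" and "Y \<in> borel_measurable M"
    and "\<forall>x. isCont (distr_fun M X) x" and "\<forall>x. isCont (distr_fun M Y) x"
    and "1 \<le> j" and "1 \<le> k"
  shows "basis_corr B M X Y j k
    = (\<integral>w. B j (distr_fun M X (X w)) * B k (distr_fun M Y (Y w)) \<partial>M)"
proof -
  have standardized: "(\<integral>w. B i (distr_fun M Z (Z w)) \<partial>M) = 0"
    "(\<integral>w. (B i (distr_fun M Z (Z w)))\<^sup>2 \<partial>M) = 1"
    if "Z \<in> borel_measurable M" "\<forall>x. isCont (distr_fun M Z) x" "1 \<le> i" for Z :: "'a \<Rightarrow> real" and i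
  proof -
    have "B 0 x = 1" for x using \<open>correlation_basis B\<close> by (simp add: correlation_basis_def)
    then show "(\<integral>w. B i (distr_fun M Z (Z w)) \<partial>M) = 0"
      using orthonormal_family_correlation_basis_comp[OF assms(1,2) that(1,2)] \<open>1 \<le> i\<close>
      unfolding orthonormal_family_def by (auto simp: id_mat_def dest: spec[of _ 0])
    show "(\<integral>w. (B i (distr_fun M Z (Z w)))\<^sup>2 \<partial>M) = 1"
      using orthonormal_family_correlation_basis_comp[OF assms(1,2) that(1,2)]
      unfolding orthonormal_family_def by (simp add: id_mat_def power2_eq_square)
  qed
  show ?thesis
    unfolding basis_corr_def
    by (rule pearson_corr_standardized) (use standardized assms in auto)
qed

lemma gram_quadratic_form_nonneg:
  fixes D :: "nat \<Rightarrow> 'a \<Rightarrow> real"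
  assumes "finite I" and "\<And>j k. j \<in> I \<Longrightarrow> k \<in> I \<Longrightarrow> integrable M (\<lambda>w. D j w * D k w)"
  shows "0 \<le> (\<Sum>j\<in>I. \<Sum>k\<in>I. v j * (\<integral>w. D j w * D k w \<partial>M) * v k)"
proof -
  have "(\<Sum>j\<in>I. \<Sum>k\<in>I. v j * (\<integral>w. D j w * D k w \<partial>M) * v k)
      = (\<Sum>j\<in>I. \<Sum>k\<in>I. \<integral>w. (v j * D j w) * (v k * D k w) \<partial>M)"
    by (simp add: algebra_simps)
  also have "\<dots> = (\<integral>w. (\<Sum>j\<in>I. \<Sum>k\<in>I. (v j * D j w) * (v k * D k w)) \<partial>M)"
    using assms
    by (simp add: mult.assoc mult.left_commute Bochner_Integration.integral_sum
        Bochner_Integration.integrable_sum)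
  also have "\<dots> = (\<integral>w. (\<Sum>j\<in>I. v j * D j w)\<^sup>2 \<partial>M)"
    by (simp add: power2_eq_square sum_product)
  also have "\<dots> \<ge> 0" by simp
  finally show ?thesis .
qed

lemma quadratic_form_cross_moment_nonneg:
  fixes A C :: "nat \<Rightarrow> 'a \<Rightarrow> real" and s :: real
  assumes "finite I" and "orthonormal_family M A" and "orthonormal_family M C" and "s * s = 1"
  shows "0 \<le> (\<Sum>j\<in>I. \<Sum>k\<in>I. v j *
    (id_mat j k + s * ((\<integral>w. A j w * C k w \<partial>M) + (\<integral>w. A k w * C j w \<partial>M)) / 2) * v k)"
proof -
  have prod: "integrable M (\<lambda>w. F j w * G k w)" if "F \<in> {A, C}" "G \<in> {A, C}" for F G j k
    using that assms(2,3) unfolding orthonormal_family_def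
    by (auto intro!: integrable_mult_of_square_integrable)
  define D where "D j w = A j w + s * C j w" for j w
  have "(\<lambda>w. D j w * D k w) = (\<lambda>w. A j w * A k w + s * (A j w * C k w) + s * (A k w * C j w)
      + (s * s) * (C j w * C k w))" for j k
    by (simp add: D_def fun_eq_iff algebra_simps)
  then have D_integrable: "integrable M (\<lambda>w. D j w * D k w)"
    and D_gram: "(\<integral>w. D j w * D k w \<partial>M)
      = 2 * (id_mat j k + s * ((\<integral>w. A j w * C k w \<partial>M) + (\<integral>w. A k w * C j w \<partial>M)) / 2)" for j k
    using prod[of A A] prod[of A C] prod[of C C] assms(2-4)
    by (simp_all add: orthonormal_family_def algebra_simps)
  have "0 \<le> (\<Sum>j\<in>I. \<Sum>k\<in>I. v j * (\<integral>w. D j w * D k w \<partial>M) * v k)"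
    using \<open>finite I\<close> D_integrable by (rule gram_quadratic_form_nonneg)
  also have "\<dots> = 2 * (\<Sum>j\<in>I. \<Sum>k\<in>I. v j *
      (id_mat j k + s * ((\<integral>w. A j w * C k w \<partial>M) + (\<integral>w. A k w * C j w \<partial>M)) / 2) * v k)"
    by (simp add: D_gram sum_distrib_left mult_ac)
  finally show ?thesis by simp
qed

lemma mat_psd_id_pm_symmetrized_cross_moment:
  fixes A C :: "nat \<Rightarrow> 'a \<Rightarrow> real" and P :: "nat \<Rightarrow> nat \<Rightarrow> real"
  assumes "orthonormal_family M A" and "orthonormal_family M C"
    and P: "\<And>j k. j \<in> {1..N} \<Longrightarrow> k \<in> {1..N} \<Longrightarrow> P j k = (\<integral>w. A j w * C k w \<partial>M)"
  shows "mat_psd N (\<lambda>j k. id_mat j k + (P j k + P k j) / 2)"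
    and "mat_psd N (\<lambda>j k. id_mat j k - (P j k + P k j) / 2)"
proof -
  have psd: "mat_psd N (\<lambda>j k. id_mat j k + s * (P j k + P k j) / 2)" if "s * s = 1" for s
  proof -
    have "(\<Sum>j\<in>{1..N}. \<Sum>k\<in>{1..N}. v j * (id_mat j k + s * (P j k + P k j) / 2) * v k)
      = (\<Sum>j\<in>{1..N}. \<Sum>k\<in>{1..N}. v j *
          (id_mat j k + s * ((\<integral>w. A j w * C k w \<partial>M) + (\<integral>w. A k w * C j w \<partial>M)) / 2) * v k)"
      for v by (intro sum.cong refl) (simp add: P)
    then show ?thesis
      using quadratic_form_cross_moment_nonneg[OF _ assms(1,2) that]
      by (simp add: mat_psd_def mat_symmetric_def id_mat_def add.commute)
  qed
  show "mat_psd N (\<lambda>j k. id_mat j k + (P j k + P k j) / 2)"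
    using psd[of 1] by simp
  have "(\<lambda>j k. id_mat j k + (-1) * (P j k + P k j) / 2) = (\<lambda>j k. id_mat j k - (P j k + P k j) / 2)"
    by (simp add: fun_eq_iff field_simps)
  then show "mat_psd N (\<lambda>j k. id_mat j k - (P j k + P k j) / 2)"
    using psd[of "-1"] by simp
qed

lemma integral_swap_exchangeable:
  fixes U V :: "'a \<Rightarrow> real" and h :: "real \<times> real \<Rightarrow> real"
  assumes [measurable]: "U \<in> borel_measurable M" "V \<in> borel_measurable M" "h \<in> borel_measurable borel"
    and exchangeable: "distr M borel (\<lambda>w. (U w, V w)) = distr M borel (\<lambda>w. (V w, U w))"
  shows "(\<integral>w. h (U w, V w) \<partial>M) = (\<integral>w. h (V w, U w) \<partial>M)"
proof -
  have "(\<integral>w. h (U w, V w) \<partial>M) = integral\<^sup>L (distr M borel (\<lambda>w. (U w, V w))) h"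
    by (simp add: integral_distr)
  also have "\<dots> = integral\<^sup>L (distr M borel (\<lambda>w. (V w, U w))) h"
    by (simp only: exchangeable)
  also have "\<dots> = (\<integral>w. h (V w, U w) \<partial>M)"
    by (simp add: integral_distr)
  finally show ?thesis .
qed

lemma pearson_corr_swap_exchangeable:
  fixes U V :: "'a \<Rightarrow> real" and f g :: "real \<Rightarrow> real"
  assumes "U \<in> borel_measurable M" "V \<in> borel_measurable M"
    and [measurable]: "f \<in> borel_measurable borel" "g \<in> borel_measurable borel"
    and exchangeable: "distr M borel (\<lambda>w. (U w, V w)) = distr M borel (\<lambda>w. (V w, U w))"
  shows "pearson_corr M (\<lambda>w. f (U w)) (\<lambda>w. g (V w)) = pearson_corr M (\<lambda>w. g (U w)) (\<lambda>w. f (V w))"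
proof -
  have [measurable]: "fst \<in> borel_measurable (borel :: (real \<times> real) measure)"
    "snd \<in> borel_measurable (borel :: (real \<times> real) measure)"
    by (intro borel_measurable_continuous_onI continuous_intros)+
  have swap: "(\<integral>w. h (U w, V w) \<partial>M) = (\<integral>w. h (V w, U w) \<partial>M)"
    if "h \<in> borel_measurable borel" for h :: "real \<times> real \<Rightarrow> real"
    using integral_swap_exchangeable[OF assms(1,2) that exchangeable] .
  define a where "a = (\<integral>w. f (U w) \<partial>M)"
  define b where "b = (\<integral>w. g (V w) \<partial>M)"
  have "(\<integral>w. f (V w) \<partial>M) = a" "(\<integral>w. g (U w) \<partial>M) = b"
    using swap[of "\<lambda>z. f (fst z)"] swap[of "\<lambda>z. g (snd z)"] by (simp_all add: a_def b_def)
  moreover have "(\<integral>w. (f (U w) - a) * (g (V w) - b) \<partial>M) = (\<integral>w. (g (U w) - b) * (f (V w) - a) \<partial>M)"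
    using swap[of "\<lambda>z. (f (fst z) - a) * (g (snd z) - b)"] by (simp add: mult.commute)
  moreover have "(\<integral>w. (f (U w) - a)\<^sup>2 \<partial>M) = (\<integral>w. (f (V w) - a)\<^sup>2 \<partial>M)"
    "(\<integral>w. (g (V w) - b)\<^sup>2 \<partial>M) = (\<integral>w. (g (U w) - b)\<^sup>2 \<partial>M)"
    using swap[of "\<lambda>z. (f (fst z) - a)\<^sup>2"] swap[of "\<lambda>z. (g (snd z) - b)\<^sup>2"] by simp_all
  ultimately show ?thesis
    unfolding pearson_corr_def a_def[symmetric] b_def[symmetric] by (simp add: mult.commute)
qed

lemma basis_corr_swap_exchangeable:
  fixes X Y :: "'a \<Rightarrow> real"
  assumes "prob_space M" and "correlation_basis B"
    and "X \<in> borel_measurable M" and "Y \<in> borel_measurable M"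
    and "distr M borel (\<lambda>w. (distr_fun M X (X w), distr_fun M Y (Y w))) =
      distr M borel (\<lambda>w. (distr_fun M Y (Y w), distr_fun M X (X w)))"
  shows "basis_corr B M X Y j k = basis_corr B M X Y k j"
proof -
  have [measurable]: "B i \<in> borel_measurable borel" for i
    using \<open>correlation_basis B\<close> by (simp add: correlation_basis_def)
  have [measurable]: "distr_fun M X \<in> borel_measurable borel" "distr_fun M Y \<in> borel_measurable borel"
    "X \<in> borel_measurable M" "Y \<in> borel_measurable M"
    using assms(1,3,4) by (simp_all add: borel_measurable_distr_fun)
  show ?thesis
    unfolding basis_corr_def by (rule pearson_corr_swap_exchangeable) (use assms(5) in simp_all)
qed

theorem proposition2:
  fixes M :: "'a measure" and X Y :: "'a \<Rightarrow> real" and B :: "nat \<Rightarrow> real \<Rightarrow> real"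
  assumes "prob_space M"
    and "correlation_basis B"
    and "X \<in> borel_measurable M" and "Y \<in> borel_measurable M"
    and "\<forall>x. isCont (distr_fun M X) x" and "\<forall>x. isCont (distr_fun M Y) x"
  defines "P \<equiv> basis_corr B M X Y"
  shows "(\<forall>N\<ge>1.
           mat_symmetric N (\<lambda>j k. id_mat j k + (P j k + P k j) / 2) \<and>
           mat_psd N (\<lambda>j k. id_mat j k + (P j k + P k j) / 2) \<and>
           mat_symmetric N (\<lambda>j k. id_mat j k - (P j k + P k j) / 2) \<and>
           mat_psd N (\<lambda>j k. id_mat j k - (P j k + P k j) / 2)) \<and>
         (distr M borel (\<lambda>w. (distr_fun M X (X w), distr_fun M Y (Y w))) =
         distr M borel (\<lambda>w. (distr_fun M Y (Y w), distr_fun M X (X w))) \<longrightarrow>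
         (\<forall>N\<ge>1. mat_psd N (\<lambda>j k. id_mat j k + P j k) \<and> mat_psd N (\<lambda>j k. id_mat j k - P j k)))"
proof -
  note orthonormal = orthonormal_family_correlation_basis_comp[OF assms(1,2,3,5)]
    orthonormal_family_correlation_basis_comp[OF assms(1,2,4,6)]
  have cross_moment: "P j k = (\<integral>w. B j (distr_fun M X (X w)) * B k (distr_fun M Y (Y w)) \<partial>M)"
    if "1 \<le> j" "1 \<le> k" for j k
    using basis_corr_eq_cross_moment[OF assms(1-6) that] unfolding P_def .
  have psd: "mat_psd N (\<lambda>j k. id_mat j k + (P j k + P k j) / 2)"
    "mat_psd N (\<lambda>j k. id_mat j k - (P j k + P k j) / 2)" for N
    using cross_moment by (auto intro!: mat_psd_id_pm_symmetrized_cross_moment[OF orthonormal])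
  moreover have "mat_psd N (\<lambda>j k. id_mat j k + P j k) \<and> mat_psd N (\<lambda>j k. id_mat j k - P j k)"
    if "distr M borel (\<lambda>w. (distr_fun M X (X w), distr_fun M Y (Y w))) =
      distr M borel (\<lambda>w. (distr_fun M Y (Y w), distr_fun M X (X w)))" for N
  proof -
    have "P j k = P k j" for j k
      using basis_corr_swap_exchangeable[OF assms(1-4) that] unfolding P_def .
    then have "(\<lambda>j k. id_mat j k + (P j k + P k j) / 2) = (\<lambda>j k. id_mat j k + P j k)"
      "(\<lambda>j k. id_mat j k - (P j k + P k j) / 2) = (\<lambda>j k. id_mat j k - P j k)"
      by (simp_all add: fun_eq_iff)
    then show ?thesis using psd[of N] by simp
  qed
  ultimately show ?thesis by (simp add: mat_psd_def)
qed

end
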